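(* Let $p$ be a prime, $t\ge 1$, and let $(K_n,\alpha)$ be an edge-labeled complete graph over $\mathbb{Z}/p^t\mathbb{Z}$ with ordered edge labels $p^{i_1},\dots,p^{i_{r_n}}$. (1) If $p^{i_{r_n}}\mid\cdots\mid p^{i_2}\mid p^{i_1}\mid p^t$ with $i_{r_n}\ge1$ and $i_1<t$, then the set consisting of $(1,\dots,1)$ and, for $j=2,\dots,n$, the vector with $p^{i_{r_{j-1}+1}}$ at $v_j$ and $0$ elsewhere, is a minimum flow-up generating set of $[\mathbb{Z}/p^t\mathbb{Z}]_{(K_n,\alpha)}$; thus the rank is $n$. (2) If $p^{i_1}\mid p^{i_2}\mid\cdots\mid p^{i_{r_n}}\mid p^t$ with $i_1\ge1$ and $i_{r_n}<t$, then the set consisting of $(1,\dots,1)$ and, for $j=2,\dots,n$, the vector with entries $p^{i_{r_n-(n-j)}}$ at $v_j,\dots,v_n$ and $0$ at $v_1,\dots,v_{j-1}$, is a minimum flow-up generating set of $[\mathbb{Z}/p^t\mathbb{Z}]_{(K_n,\alpha)}$; thus the rank is $n$.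
   Context: A spline on an edge-labeled graph $(G,\alpha)$ over $\mathbb{Z}/m\mathbb{Z}$ (edges labeled by nonzero ideals) is a vector $(f_{v_1},\dots,f_{v_n})\in(\mathbb{Z}/m\mathbb{Z})^n$ with $f_{v_i}-f_{v_j}\in\alpha(v_iv_j)$ for every edge; the splines form a $\mathbb{Z}$-module $[\mathbb{Z}/m\mathbb{Z}]_{(G,\alpha)}$. An $i$-th flow-up class is a spline with $f_{v_i}\ne0$ and $f_{v_t}=0$ for $t<i$. A minimum flow-up generating set is a generating set of the $\mathbb{Z}$-module of smallest possible size (the rank) consisting of flow-up classes. $K_n$ is the complete graph on $v_1,\dots,v_n$; $r_k=k(k-1)/2$; for $1\le j<k\le n$ the edge $v_jv_k$ is $e_{r_{k-1}+j}$. "Ordered edge labels $l_1,\dots,l_{r_n}$" means $\alpha(e_s)$ is the ideal generated by $l_s+m\mathbb{Z}$. *)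

theory Defs
  imports "HOL-Number_Theory.Number_Theory"
begin

text \<open>Vertices of K_n are 1..n. A vector in (Z/mZ)^n is a function nat => int that is zero
outside {1..n} and takes canonical representatives in {0..<m} on {1..n}.
Edge labels l :: nat => int indexed by 1..r_n; the label of edge e_s is the ideal
generated by l s + mZ.\<close>

definition r :: "nat \<Rightarrow> nat" where
  "r k = k * (k - 1) div 2"

definition edge_index :: "nat \<Rightarrow> nat \<Rightarrow> nat" where
  "edge_index j k = r (k - 1) + j"

definition is_vec :: "int \<Rightarrow> nat \<Rightarrow> (nat \<Rightarrow> int) \<Rightarrow> bool" where
  "is_vec m n f \<longleftrightarrow> (\<forall>v. v \<notin> {1..n} \<longrightarrow> f v = 0) \<and> (\<forall>v\<in>{1..n}. 0 \<le> f v \<and> f v < m)"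

definition in_ideal :: "int \<Rightarrow> int \<Rightarrow> int \<Rightarrow> bool" where
  "in_ideal m l x \<longleftrightarrow> (\<exists>c. [x = c * l] (mod m))"

definition splines :: "int \<Rightarrow> nat \<Rightarrow> (nat \<Rightarrow> int) \<Rightarrow> (nat \<Rightarrow> int) set" where
  "splines m n l = {f. is_vec m n f \<and>
     (\<forall>j k. 1 \<le> j \<and> j < k \<and> k \<le> n \<longrightarrow> in_ideal m (l (edge_index j k)) (f j - f k))}"

definition zspan :: "int \<Rightarrow> nat \<Rightarrow> (nat \<Rightarrow> int) set \<Rightarrow> (nat \<Rightarrow> int) set" where
  "zspan m n S = {f. \<exists>c :: (nat \<Rightarrow> int) \<Rightarrow> int.
      \<forall>v. f v = (if v \<in> {1..n} then (\<Sum>g\<in>S. c g * g v) mod m else 0)}"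

definition generating_set :: "int \<Rightarrow> nat \<Rightarrow> (nat \<Rightarrow> int) \<Rightarrow> (nat \<Rightarrow> int) set \<Rightarrow> bool" where
  "generating_set m n l S \<longleftrightarrow> finite S \<and> S \<subseteq> splines m n l \<and> zspan m n S = splines m n l"

definition spline_rank :: "int \<Rightarrow> nat \<Rightarrow> (nat \<Rightarrow> int) \<Rightarrow> nat" where
  "spline_rank m n l = (LEAST k. \<exists>S. generating_set m n l S \<and> card S = k)"

definition flow_up :: "nat \<Rightarrow> (nat \<Rightarrow> int) \<Rightarrow> nat \<Rightarrow> bool" where
  "flow_up n f i \<longleftrightarrow> i \<in> {1..n} \<and> f i \<noteq> 0 \<and> (\<forall>t. 1 \<le> t \<and> t < i \<longrightarrow> f t = 0)"

definition min_flow_up_gen :: "int \<Rightarrow> nat \<Rightarrow> (nat \<Rightarrow> int) \<Rightarrow> (nat \<Rightarrow> int) set \<Rightarrow> bool" where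
  "min_flow_up_gen m n l S \<longleftrightarrow> generating_set m n l S \<and> card S = spline_rank m n l \<and>
     (\<forall>f\<in>S. \<exists>i. flow_up n f i)"

definition ones :: "nat \<Rightarrow> nat \<Rightarrow> int" where
  "ones n v = (if v \<in> {1..n} then 1 else 0)"

end

theory Submission
  imports Defs
begin

(* In case (1) a spline f is f(v_1) (1,...,1) plus multiples of the vectors supported at v_j,
   because the label of v_1 v_j divides f(v_j) - f(v_1); in case (2) the increments
   f(v_j) - f(v_(j-1)) are divisible by the label of v_(j-1) v_n and telescope.

   For minimality, choose for every j >= 2 a parent vertex (v_1, resp. v_(j-1)) and an exponent
   d_j < t such that p^(d_j) divides the increment of every spline from the parent to v_j.
   The residue f(v_1) mod p together with the leading p-adic digits of these increments is an
   additive map from the splines onto (Z/pZ)^n which, for any generating set S, only depends on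
   the coefficients mod p of f with respect to S. Hence p^n <= p^|S|. *)

lemma in_ideal_iff_gcd_dvd: "in_ideal m l x \<longleftrightarrow> gcd l m dvd x"
proof
  assume "in_ideal m l x"
  then obtain c where "m dvd x - c * l"
    unfolding in_ideal_def by (auto simp: cong_iff_dvd_diff)
  then have "gcd l m dvd (x - c * l) + c * l"
    by (meson dvd_add dvd_mult dvd_trans gcd_dvd1 gcd_dvd2)
  then show "gcd l m dvd x" by simp
next
  assume "gcd l m dvd x"
  then obtain k where x: "x = gcd l m * k" by blast
  obtain u v where uv: "u * l + v * m = gcd l m" using bezout_int by blast
  have "x - (k * u) * l = (k * v) * m" unfolding x uv[symmetric] by (simp add: algebra_simps)
  then have "[x = (k * u) * l] (mod m)" by (simp add: cong_iff_dvd_diff)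
  then show "in_ideal m l x" unfolding in_ideal_def by blast
qed

lemma splines_iff_gcd_dvd:
  "f \<in> splines m n l \<longleftrightarrow> is_vec m n f \<and>
     (\<forall>j k. 1 \<le> j \<and> j < k \<and> k \<le> n \<longrightarrow> gcd (l (edge_index j k)) m dvd f j - f k)"
  by (simp add: splines_def in_ideal_iff_gcd_dvd)

lemma splines_iff_dvd:
  fixes m :: int
  assumes "\<And>j k. 1 \<le> j \<Longrightarrow> j < k \<Longrightarrow> k \<le> n \<Longrightarrow> l (edge_index j k) dvd m"
  shows "f \<in> splines m n l \<longleftrightarrow> is_vec m n f \<and>
     (\<forall>j k. 1 \<le> j \<and> j < k \<and> k \<le> n \<longrightarrow> l (edge_index j k) dvd f j - f k)"
  using assms by (auto simp: splines_iff_gcd_dvd)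

lemma zspan_subset_splines:
  assumes "S \<subseteq> splines m n l" "m > 0"
  shows "zspan m n S \<subseteq> splines m n l"
proof
  fix f assume "f \<in> zspan m n S"
  then obtain c where c: "f = (\<lambda>v. if v \<in> {1..n} then (\<Sum>g\<in>S. c g * g v) mod m else 0)"
    unfolding zspan_def by blast
  have "gcd (l (edge_index j k)) m dvd f j - f k" if jk: "1 \<le> j" "j < k" "k \<le> n" for j k
  proof -
    let ?d = "gcd (l (edge_index j k)) m"
    have "?d dvd g j - g k" if "g \<in> S" for g
      using that assms(1) jk by (auto simp: splines_iff_gcd_dvd)
    then have "?d dvd (\<Sum>g\<in>S. c g * (g j - g k))" by (simp add: dvd_sum)
    moreover have "[f j - f k = (\<Sum>g\<in>S. c g * (g j - g k))] (mod ?d)"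
    proof (rule cong_dvd_modulus)
      show "[f j - f k = (\<Sum>g\<in>S. c g * (g j - g k))] (mod m)"
        using jk by (simp add: c cong_def mod_diff_eq sum_subtractf right_diff_distrib)
    qed simp
    ultimately show ?thesis using cong_dvd_iff by blast
  qed
  then show "f \<in> splines m n l"
    using assms(2) by (simp add: splines_iff_gcd_dvd is_vec_def c)
qed

lemma spline_mod_eq: "f \<in> splines m n l \<Longrightarrow> v \<in> {1..n} \<Longrightarrow> f v mod m = f v"
  by (simp add: splines_def is_vec_def)

lemma ones_in_splines: "m > 1 \<Longrightarrow> ones n \<in> splines m n l"
  by (simp add: splines_iff_gcd_dvd is_vec_def ones_def)

lemma point_vector_in_splines:
  fixes m c :: int
  assumes "0 \<le> c" "c < m" "j \<in> {1..n}"
    and "\<And>u w. 1 \<le> u \<Longrightarrow> u < w \<Longrightarrow> w \<le> n \<Longrightarrow> u = j \<or> w = j \<Longrightarrow> l (edge_index u w) dvd c"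
  shows "(\<lambda>v. if v = j then c else 0) \<in> splines m n l"
proof -
  have "gcd (l (edge_index u w)) m dvd (if u = j then c else 0) - (if w = j then c else 0)"
    if "1 \<le> u" "u < w" "w \<le> n" for u w
  proof (cases "u = j \<or> w = j")
    case True
    then have "gcd (l (edge_index u w)) m dvd c" using assms(4)[OF that] by (meson dvd_trans gcd_dvd1)
    with True that show ?thesis by auto
  qed simp
  then show ?thesis using assms(1-3) by (simp add: splines_iff_gcd_dvd is_vec_def)
qed

lemma step_vector_in_splines:
  fixes m c :: int
  assumes "0 \<le> c" "c < m" "1 \<le> j"
    and "\<And>u w. 1 \<le> u \<Longrightarrow> u < j \<Longrightarrow> j \<le> w \<Longrightarrow> w \<le> n \<Longrightarrow> l (edge_index u w) dvd c"
  shows "(\<lambda>v. if j \<le> v \<and> v \<le> n then c else 0) \<in> splines m n l"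
proof -
  have "gcd (l (edge_index u w)) m dvd
          (if j \<le> u \<and> u \<le> n then c else 0) - (if j \<le> w \<and> w \<le> n then c else 0)"
    if "1 \<le> u" "u < w" "w \<le> n" for u w
  proof (cases "u < j \<and> j \<le> w")
    case True
    then have "gcd (l (edge_index u w)) m dvd c" using assms(4) that by (meson dvd_trans gcd_dvd1)
    with True that show ?thesis by auto
  qed (use that in auto)
  then show ?thesis using assms(1-3) by (simp add: splines_iff_gcd_dvd is_vec_def)
qed

lemma inj_on_flow_up:
  assumes "\<And>j. j \<in> I \<Longrightarrow> flow_up n (B j) j"
  shows "inj_on B I"
proof
  fix a b assume ab: "a \<in> I" "b \<in> I" "B a = B b"
  have "\<not> a < b" if "a \<in> I" "b \<in> I" "B a = B b" for a b
    using assms[OF that(1)] assms[OF that(2)] that(3) by (auto simp: flow_up_def)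
  from this[of a b] this[of b a] ab show "a = b" by auto
qed

lemma zspan_image:
  assumes "inj_on B I"
  shows "zspan m n (B ` I) =
    {f. \<exists>x. \<forall>v. f v = (if v \<in> {1..n} then (\<Sum>k\<in>I. x k * B k v) mod m else 0)}"
proof -
  have reindex: "(\<Sum>g\<in>B ` I. c g * g v) = (\<Sum>k\<in>I. c (B k) * B k v)" for c v
    using assms by (simp add: sum.reindex)
  have inv: "(\<Sum>k\<in>I. x k * B k v) = (\<Sum>g\<in>B ` I. (x \<circ> inv_into I B) g * g v)" for x v
    unfolding reindex using assms by (intro sum.cong) auto
  show ?thesis
  proof (rule equalityI; rule subsetI)
    fix f assume "f \<in> zspan m n (B ` I)"
    then obtain c where "\<forall>v. f v = (if v \<in> {1..n} then (\<Sum>k\<in>I. c (B k) * B k v) mod m else 0)"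
      unfolding zspan_def reindex by blast
    then show "f \<in> {f. \<exists>x. \<forall>v. f v = (if v \<in> {1..n} then (\<Sum>k\<in>I. x k * B k v) mod m else 0)}"
      by (intro CollectI exI[of _ "c \<circ> B"]) simp
  next
    fix f assume "f \<in> {f. \<exists>x. \<forall>v. f v = (if v \<in> {1..n} then (\<Sum>k\<in>I. x k * B k v) mod m else 0)}"
    then obtain x where "\<forall>v. f v = (if v \<in> {1..n} then (\<Sum>k\<in>I. x k * B k v) mod m else 0)"
      by blast
    then show "f \<in> zspan m n (B ` I)"
      unfolding zspan_def inv by (intro CollectI exI[of _ "x \<circ> inv_into I B"])
  qed
qed

lemma generating_set_image:
  fixes m :: int
  assumes "m > 0" "finite I" "inj_on B I" "B ` I \<subseteq> splines m n l"
    and span: "\<And>f. f \<in> splines m n l \<Longrightarrow> \<exists>x. \<forall>v\<in>{1..n}. f v = (\<Sum>k\<in>I. x k * B k v) mod m"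
  shows "generating_set m n l (B ` I)"
proof -
  have "splines m n l \<subseteq> zspan m n (B ` I)"
  proof
    fix f assume f: "f \<in> splines m n l"
    then obtain x where "\<forall>v\<in>{1..n}. f v = (\<Sum>k\<in>I. x k * B k v) mod m" using span by blast
    with f have "\<forall>v. f v = (if v \<in> {1..n} then (\<Sum>k\<in>I. x k * B k v) mod m else 0)"
      by (auto simp: splines_def is_vec_def)
    then show "f \<in> zspan m n (B ` I)" using zspan_image[OF assms(3)] by blast
  qed
  with zspan_subset_splines[OF assms(4,1)] assms(2,4) show ?thesis
    by (simp add: generating_set_def)
qed

lemma cong_power_mult_imp_div_mod_eq:
  fixes p a y :: int
  assumes "d < t" "p \<noteq> 0" "[a = p ^ d * y] (mod p ^ t)"
  shows "a div p ^ d mod p = y mod p"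
proof -
  obtain z where "a - p ^ d * y = p ^ t * z"
    using assms(3) by (auto simp: cong_iff_dvd_diff)
  moreover have "p ^ t = p ^ d * (p * p ^ (t - d - 1))"
    using assms(1) by (simp flip: power_add power_Suc)
  ultimately have "a = p ^ d * (y + p * (p ^ (t - d - 1) * z))"
    by (simp add: algebra_simps)
  then show ?thesis using assms(2) by simp
qed

lemma sum_mod_cong:
  fixes f g :: "'a \<Rightarrow> 'b::euclidean_semiring_cancel"
  assumes "\<And>x. x \<in> A \<Longrightarrow> f x mod m = g x mod m"
  shows "sum f A mod m = sum g A mod m"
  by (metis (mono_tags, lifting) assms mod_sum_eq sum.cong)

definition leading_digits ::
    "int \<Rightarrow> nat \<Rightarrow> (nat \<Rightarrow> nat) \<Rightarrow> (nat \<Rightarrow> nat) \<Rightarrow> (nat \<Rightarrow> int) \<Rightarrow> nat \<Rightarrow> int" where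
  "leading_digits p n pv d f =
     (\<lambda>v\<in>{1..n}. (if v = 1 then f 1 else (f v - f (pv v)) div p ^ d v) mod p)"

lemma leading_digits_lincomb:
  fixes p :: int
  assumes "p \<noteq> 0" "t \<ge> 1" "v \<in> {1..n}"
    and tree: "v \<noteq> 1 \<Longrightarrow> pv v \<in> {1..n} \<and> d v < t"
    and dvd: "\<And>i. i \<in> I \<Longrightarrow> v \<noteq> 1 \<Longrightarrow> p ^ d v dvd g i v - g i (pv v)"
    and f: "\<And>u. u \<in> {1..n} \<Longrightarrow> f u = (\<Sum>i\<in>I. c i * g i u) mod p ^ t"
  shows "leading_digits p n pv d f v = (\<Sum>i\<in>I. c i * leading_digits p n pv d (g i) v) mod p"
proof -
  define raw where "raw h = (if v = 1 then h 1 else (h v - h (pv v)) div p ^ d v)" for h :: "nat \<Rightarrow> int"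
  have digit: "leading_digits p n pv d h v = raw h mod p" for h
    using assms(3) by (simp add: leading_digits_def raw_def)
  have "raw f mod p = (\<Sum>i\<in>I. c i * raw (g i)) mod p"
  proof (cases "v = 1")
    case True
    have "p dvd p ^ t" using \<open>t \<ge> 1\<close> by (simp add: dvd_power)
    then show ?thesis using f[of 1] True assms(3) by (simp add: raw_def mod_mod_cancel)
  next
    case False
    with tree have pv: "pv v \<in> {1..n}" and "d v < t" by auto
    have "[f v - f (pv v) = (\<Sum>i\<in>I. c i * (g i v - g i (pv v)))] (mod p ^ t)"
      using f[OF assms(3)] f[OF pv]
      by (simp add: cong_def mod_diff_eq sum_subtractf right_diff_distrib)
    also have "(\<Sum>i\<in>I. c i * (g i v - g i (pv v))) = p ^ d v * (\<Sum>i\<in>I. c i * raw (g i))"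
      unfolding sum_distrib_left
      by (rule sum.cong) (use dvd False in \<open>auto simp: raw_def\<close>)
    finally show ?thesis
      using cong_power_mult_imp_div_mod_eq[OF \<open>d v < t\<close> \<open>p \<noteq> 0\<close>] False by (simp add: raw_def)
  qed
  also have "\<dots> = (\<Sum>i\<in>I. c i * (raw (g i) mod p)) mod p"
    by (rule sum_mod_cong) (simp add: mod_mult_right_eq)
  finally show ?thesis by (simp add: digit)
qed

lemma card_generating_set_ge:
  fixes p :: int
  assumes "p > 1" "t \<ge> 1"
    and tree: "\<And>v. v \<in> {2..n} \<Longrightarrow> pv v \<in> {1..n} \<and> d v < t"
    and dvd: "\<And>g v. g \<in> splines (p ^ t) n l \<Longrightarrow> v \<in> {2..n} \<Longrightarrow> p ^ d v dvd g v - g (pv v)"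
    and onto: "PiE {1..n} (\<lambda>_. {0..<p}) \<subseteq> leading_digits p n pv d ` splines (p ^ t) n l"
    and gen: "generating_set (p ^ t) n l S"
  shows "n \<le> card S"
proof -
  let ?digits = "leading_digits p n pv d"
  define F where "F c = (\<lambda>v\<in>{1..n}. (\<Sum>g\<in>S. c g * ?digits g v) mod p)" for c
  have fin: "finite S" and S_splines: "S \<subseteq> splines (p ^ t) n l"
    and span: "zspan (p ^ t) n S = splines (p ^ t) n l"
    using gen by (auto simp: generating_set_def)
  have "?digits ` splines (p ^ t) n l \<subseteq> F ` PiE S (\<lambda>_. {0..<p})"
  proof
    fix y assume "y \<in> ?digits ` splines (p ^ t) n l"
    then obtain f where f: "f \<in> zspan (p ^ t) n S" and y: "y = ?digits f"
      using span by blast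
    then obtain c where c: "\<And>v. f v = (if v \<in> {1..n} then (\<Sum>g\<in>S. c g * g v) mod p ^ t else 0)"
      unfolding zspan_def by blast
    define c' where "c' = restrict (\<lambda>g. c g mod p) S"
    have "?digits f v = F c' v" for v
    proof (cases "v \<in> {1..n}")
      case True
      have "?digits f v = (\<Sum>g\<in>S. c g * ?digits g v) mod p"
        by (rule leading_digits_lincomb[where g = "\<lambda>g. g"])
           (use assms True S_splines c in auto)
      also have "\<dots> = (\<Sum>g\<in>S. c' g * ?digits g v) mod p"
        by (rule sum_mod_cong) (simp add: c'_def mod_mult_left_eq)
      finally show ?thesis using True by (simp add: F_def)
    qed (simp add: F_def leading_digits_def del: atLeastAtMost_iff)
    moreover have "c' \<in> PiE S (\<lambda>_. {0..<p})" using \<open>p > 1\<close> by (simp add: c'_def)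
    ultimately show "y \<in> F ` PiE S (\<lambda>_. {0..<p})" using y by blast
  qed
  with onto have "card (PiE {1..n} (\<lambda>_. {0..<p})) \<le> card (F ` PiE S (\<lambda>_. {0..<p}))"
    by (intro card_mono) (auto simp: fin finite_PiE)
  also have "\<dots> \<le> card (PiE S (\<lambda>_. {0..<p}))"
    by (rule card_image_le) (simp add: fin finite_PiE)
  finally have "nat p ^ n \<le> nat p ^ card S" by (simp add: card_PiE fin)
  then show ?thesis using \<open>p > 1\<close> by (simp add: power_le_imp_le_exp)
qed

lemma leading_digits_flow_up_basis:
  fixes p :: int
  assumes "p > 1" "k \<in> {1..n}" "v \<in> {1..n}"
    and flow: "flow_up n (B k) k" and root: "B 1 1 = 1"
    and step: "v \<noteq> 1 \<Longrightarrow> B k v - B k (pv v) = (if k = v then p ^ d v else 0)"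
  shows "leading_digits p n pv d (B k) v = (if k = v then 1 else 0)"
proof (cases "v = 1")
  case True
  have "k \<noteq> 1 \<Longrightarrow> B k 1 = 0" using flow by (simp add: flow_up_def)
  then show ?thesis using True root assms(1,3) by (auto simp: leading_digits_def)
next
  case False
  then show ?thesis using step assms(1,3) by (simp add: leading_digits_def)
qed

lemma leading_digits_onto:
  fixes p :: int and B :: "nat \<Rightarrow> nat \<Rightarrow> int"
  assumes "p > 1" "t \<ge> 1" and root: "B 1 1 = 1"
    and flow: "\<And>j. j \<in> {1..n} \<Longrightarrow> flow_up n (B j) j"
    and tree: "\<And>v. v \<in> {2..n} \<Longrightarrow> pv v \<in> {1..n} \<and> d v < t"
    and step: "\<And>j k. j \<in> {2..n} \<Longrightarrow> k \<in> {1..n} \<Longrightarrow>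
                 B k j - B k (pv j) = (if k = j then p ^ d j else 0)"
  shows "PiE {1..n} (\<lambda>_. {0..<p}) \<subseteq> leading_digits p n pv d ` zspan (p ^ t) n (B ` {1..n})"
proof
  fix x assume x: "x \<in> PiE {1..n} (\<lambda>_. {0..<p})"
  let ?f = "\<lambda>v. if v \<in> {1..n} then (\<Sum>k=1..n. x k * B k v) mod p ^ t else 0"
  have basis: "leading_digits p n pv d (B k) v = (if k = v then 1 else 0)"
    if "k \<in> {1..n}" "v \<in> {1..n}" for k v
    by (rule leading_digits_flow_up_basis[where B = B and pv = pv and d = d])
       (use that assms(1) flow root step in auto)
  have "leading_digits p n pv d ?f v = x v" for v
  proof (cases "v \<in> {1..n}")
    case True
    have v_tree: "v \<noteq> 1 \<Longrightarrow> pv v \<in> {1..n} \<and> d v < t"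
      and v_dvd: "\<And>k. k \<in> {1..n} \<Longrightarrow> v \<noteq> 1 \<Longrightarrow> p ^ d v dvd B k v - B k (pv v)"
      using tree[of v] step[of v] True by auto
    have "leading_digits p n pv d ?f v = (\<Sum>k=1..n. x k * leading_digits p n pv d (B k) v) mod p"
      by (rule leading_digits_lincomb[where t = t, OF _ _ True])
         (use \<open>p > 1\<close> \<open>t \<ge> 1\<close> v_tree v_dvd in auto)
    also have "\<dots> = x v mod p"
      using True by (simp add: basis if_distrib[of "\<lambda>z. _ * z"] cong: if_cong)
    finally show ?thesis using PiE_mem[OF x True] by simp
  next
    case False
    then show ?thesis by (simp add: leading_digits_def PiE_arb[OF x False] del: atLeastAtMost_iff)
  qed
  then have "x = leading_digits p n pv d ?f" by auto
  moreover have "?f \<in> zspan (p ^ t) n (B ` {1..n})"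
    using zspan_image[OF inj_on_flow_up[OF flow]] by blast
  ultimately show "x \<in> leading_digits p n pv d ` zspan (p ^ t) n (B ` {1..n})" by (rule image_eqI)
qed

lemma min_flow_up_gen_of_flow_up_basis:
  fixes p :: int and B :: "nat \<Rightarrow> nat \<Rightarrow> int"
  assumes "p > 1" "t \<ge> 1" and root: "B 1 1 = 1"
    and flow: "\<And>j. j \<in> {1..n} \<Longrightarrow> flow_up n (B j) j"
    and B_splines: "\<And>j. j \<in> {1..n} \<Longrightarrow> B j \<in> splines (p ^ t) n l"
    and span: "\<And>f. f \<in> splines (p ^ t) n l \<Longrightarrow>
                 \<exists>x. \<forall>v\<in>{1..n}. f v = (\<Sum>k=1..n. x k * B k v) mod p ^ t"
    and tree: "\<And>v. v \<in> {2..n} \<Longrightarrow> pv v \<in> {1..n} \<and> d v < t"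
    and dvd: "\<And>g v. g \<in> splines (p ^ t) n l \<Longrightarrow> v \<in> {2..n} \<Longrightarrow> p ^ d v dvd g v - g (pv v)"
    and step: "\<And>j k. j \<in> {2..n} \<Longrightarrow> k \<in> {1..n} \<Longrightarrow>
                 B k j - B k (pv j) = (if k = j then p ^ d j else 0)"
  shows "min_flow_up_gen (p ^ t) n l (B ` {1..n}) \<and> card (B ` {1..n}) = n
         \<and> spline_rank (p ^ t) n l = n"
proof -
  have inj: "inj_on B {1..n}" using flow by (rule inj_on_flow_up)
  then have card: "card (B ` {1..n}) = n" by (simp add: card_image)
  have gen: "generating_set (p ^ t) n l (B ` {1..n})"
    by (rule generating_set_image[OF _ _ inj _ span]) (use \<open>p > 1\<close> B_splines in auto)
  then have "PiE {1..n} (\<lambda>_. {0..<p}) \<subseteq> leading_digits p n pv d ` splines (p ^ t) n l"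
    using leading_digits_onto[OF assms(1-3) flow tree step] by (simp add: generating_set_def)
  then have "n \<le> card S" if "generating_set (p ^ t) n l S" for S
    using card_generating_set_ge[OF assms(1,2) tree dvd _ that] by blast
  then have "spline_rank (p ^ t) n l = n"
    unfolding spline_rank_def using gen card by (intro Least_equality) auto
  moreover have "\<forall>f\<in>B ` {1..n}. \<exists>i. flow_up n f i" using flow by blast
  ultimately show ?thesis using gen card by (simp add: min_flow_up_gen_def)
qed

lemma min_flow_up_gen_insert_ones:
  fixes p :: int and G :: "nat \<Rightarrow> nat \<Rightarrow> int"
  assumes "p > 1" "t \<ge> 1" "n \<ge> 1"
    and flow: "\<And>j. j \<in> {2..n} \<Longrightarrow> flow_up n (G j) j"
    and G_splines: "\<And>j. j \<in> {2..n} \<Longrightarrow> G j \<in> splines (p ^ t) n l"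
    and span: "\<And>f. f \<in> splines (p ^ t) n l \<Longrightarrow>
                 \<exists>x. \<forall>v\<in>{1..n}. f v = (x 1 + (\<Sum>k=2..n. x k * G k v)) mod p ^ t"
    and tree: "\<And>v. v \<in> {2..n} \<Longrightarrow> pv v \<in> {1..n} \<and> d v < t"
    and dvd: "\<And>g v. g \<in> splines (p ^ t) n l \<Longrightarrow> v \<in> {2..n} \<Longrightarrow> p ^ d v dvd g v - g (pv v)"
    and step: "\<And>j k. j \<in> {2..n} \<Longrightarrow> k \<in> {2..n} \<Longrightarrow>
                 G k j - G k (pv j) = (if k = j then p ^ d j else 0)"
  shows "let S = insert (ones n) (G ` {2..n})
         in min_flow_up_gen (p ^ t) n l S \<and> card S = n \<and> spline_rank (p ^ t) n l = n"
proof -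
  define B where "B k = (if k = 1 then ones n else G k)" for k
  have "{1..n} = insert 1 {2..n}" using \<open>n \<ge> 1\<close> by auto
  then have S: "insert (ones n) (G ` {2..n}) = B ` {1..n}" by (auto simp: B_def)
  have "(\<Sum>k=1..n. x k * B k v) = x 1 + (\<Sum>k=2..n. x k * G k v)" if "v \<in> {1..n}" for x v
    using that \<open>n \<ge> 1\<close> by (simp add: sum.atLeast_Suc_atMost B_def ones_def numeral_2_eq_2)
  then have B_span: "\<exists>x. \<forall>v\<in>{1..n}. f v = (\<Sum>k=1..n. x k * B k v) mod p ^ t"
    if "f \<in> splines (p ^ t) n l" for f
    using span[OF that] by simp
  have "min_flow_up_gen (p ^ t) n l (B ` {1..n}) \<and> card (B ` {1..n}) = n
        \<and> spline_rank (p ^ t) n l = n"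
  proof (rule min_flow_up_gen_of_flow_up_basis[OF assms(1,2) _ _ _ B_span tree dvd])
    show "B 1 1 = 1" using \<open>n \<ge> 1\<close> by (simp add: B_def ones_def)
    show "flow_up n (B j) j" if "j \<in> {1..n}" for j
      using that flow[of j] by (cases "j = 1") (auto simp: B_def flow_up_def ones_def)
    show "B j \<in> splines (p ^ t) n l" if "j \<in> {1..n}" for j
      using that G_splines[of j] ones_in_splines \<open>p > 1\<close> \<open>t \<ge> 1\<close> by (simp add: B_def)
    show "B k j - B k (pv j) = (if k = j then p ^ d j else 0)" if "j \<in> {2..n}" "k \<in> {1..n}" for j k
      using that step[of j k] tree[of j] by (auto simp: B_def ones_def)
  qed
  then show ?thesis unfolding S by simp
qed

lemma r_Suc: "r (Suc k) = r k + k"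
  by (cases k) (simp_all add: r_def algebra_simps)

lemma r_mono: "a \<le> b \<Longrightarrow> r a \<le> r b"
  by (induction b rule: dec_induct) (auto simp: r_Suc)

lemma edge_index_in_range:
  assumes "1 \<le> j" "j < k" "k \<le> n"
  shows "edge_index j k \<in> {1..r n}"
proof -
  have "edge_index j k \<le> r k"
    using assms r_Suc[of "k - 1"] by (simp add: edge_index_def)
  also have "\<dots> \<le> r n" using assms(3) by (rule r_mono)
  finally show ?thesis using assms(1) by (simp add: edge_index_def)
qed

lemma edge_index_mono:
  assumes "j \<le> j'" "k \<le> k'"
  shows "edge_index j k \<le> edge_index j' k'"
proof -
  have "r (k - 1) \<le> r (k' - 1)" using assms(2) by (intro r_mono) simp
  with assms(1) show ?thesis by (simp add: edge_index_def)
qed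

lemma edge_index_pred_last: "1 \<le> j \<Longrightarrow> j \<le> n \<Longrightarrow> edge_index (j - 1) n = r n - (n - j)"
  using r_Suc[of "n - 1"] by (simp add: edge_index_def)

lemma splines_power_labels_iff:
  fixes p :: int
  assumes "p > 0" "\<And>j k. 1 \<le> j \<Longrightarrow> j < k \<Longrightarrow> k \<le> n \<Longrightarrow> ie (edge_index j k) \<le> t"
  shows "f \<in> splines (p ^ t) n (\<lambda>s. p ^ ie s) \<longleftrightarrow> is_vec (p ^ t) n f \<and>
     (\<forall>j k. 1 \<le> j \<and> j < k \<and> k \<le> n \<longrightarrow> p ^ ie (edge_index j k) dvd f j - f k)"
  by (rule splines_iff_dvd) (simp add: assms(2) le_imp_power_dvd)

lemma edge_exponent_mono:
  fixes ie :: "nat \<Rightarrow> 'a::order"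
  assumes mono: "\<And>s. 1 \<le> s \<Longrightarrow> s < r n \<Longrightarrow> ie s \<le> ie (Suc s)"
    and "1 \<le> u" "u \<le> u'" "w \<le> w'" "u' < w'" "w' \<le> n"
  shows "ie (edge_index u w) \<le> ie (edge_index u' w')"
proof (rule lift_Suc_mono_le_ivl[where f = ie and N = "{1..<r n}"])
  show "edge_index u w \<le> edge_index u' w'" using assms(3,4) by (rule edge_index_mono)
  have "1 \<le> edge_index u w" using assms(2) by (simp add: edge_index_def)
  moreover have "edge_index u' w' \<le> r n" using edge_index_in_range[of u' w' n] assms(2-6) by simp
  ultimately show "{edge_index u w..<edge_index u' w'} \<subseteq> {1..<r n}" by auto
qed (use mono in auto)

lemma edge_exponent_antimono:
  fixes ie :: "nat \<Rightarrow> 'a::order"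
  assumes anti: "\<And>s. 1 \<le> s \<Longrightarrow> s < r n \<Longrightarrow> ie (Suc s) \<le> ie s"
    and "1 \<le> u" "u \<le> u'" "w \<le> w'" "u' < w'" "w' \<le> n"
  shows "ie (edge_index u' w') \<le> ie (edge_index u w)"
proof (rule lift_Suc_antimono_le_ivl[where f = ie and N = "{1..<r n}"])
  show "edge_index u w \<le> edge_index u' w'" using assms(3,4) by (rule edge_index_mono)
  have "1 \<le> edge_index u w" using assms(2) by (simp add: edge_index_def)
  moreover have "edge_index u' w' \<le> r n" using edge_index_in_range[of u' w' n] assms(2-6) by simp
  ultimately show "{edge_index u w..<edge_index u' w'} \<subseteq> {1..<r n}" by auto
qed (use anti in auto)

lemma point_vector_expansion:
  fixes f c x :: "nat \<Rightarrow> int"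
  assumes "v \<in> {1..n}" "x 1 = f 1" "\<And>k. k \<in> {2..n} \<Longrightarrow> x k * c k = f k - f 1"
  shows "x 1 + (\<Sum>k=2..n. x k * (if v = k then c k else 0)) = f v"
  using assms by (cases "v = 1") (simp_all add: if_distrib[of "\<lambda>z. _ * z"] cong: if_cong)

lemma step_vector_expansion:
  fixes f c x :: "nat \<Rightarrow> int"
  assumes "v \<in> {1..n}" "x 1 = f 1" "\<And>k. k \<in> {2..n} \<Longrightarrow> x k * c k = f k - f (k - 1)"
  shows "x 1 + (\<Sum>k=2..n. x k * (if k \<le> v \<and> v \<le> n then c k else 0)) = f v"
proof -
  have "(\<Sum>k=2..n. x k * (if k \<le> v \<and> v \<le> n then c k else 0))
          = (\<Sum>k=2..n. if k \<le> v then f k - f (k - 1) else 0)"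
    using assms by (intro sum.cong) auto
  also have "\<dots> = (\<Sum>k=2..v. f k - f (k - 1))"
    using assms(1) by (intro sum.mono_neutral_cong_right) auto
  also have "\<dots> = (\<Sum>i=1..v-1. f (Suc i) - f i)"
    using assms(1) sum.shift_bounds_cl_Suc_ivl[of "\<lambda>k. f k - f (k - 1)" 1 "v - 1"]
    by (simp add: numeral_2_eq_2)
  also have "\<dots> = f v - f 1" using assms(1) sum_Suc_diff[of 1 "v - 1" f] by simp
  finally show ?thesis using assms(2) by simp
qed

lemma min_flow_up_gen_antitone_labels:
  fixes p :: int and ie :: "nat \<Rightarrow> nat"
  assumes "p > 1" "t \<ge> 1" "n \<ge> 1"
    and anti: "\<And>s. 1 \<le> s \<Longrightarrow> s < r n \<Longrightarrow> ie (Suc s) \<le> ie s" and "ie 1 < t"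
  shows "let S = insert (ones n) ((\<lambda>j. \<lambda>v. if v = j then p ^ ie (r (j - 1) + 1) else 0) ` {2..n})
         in min_flow_up_gen (p ^ t) n (\<lambda>s. p ^ ie s) S \<and> card S = n
            \<and> spline_rank (p ^ t) n (\<lambda>s. p ^ ie s) = n"
proof -
  define a where "a j = ie (r (j - 1) + 1)" for j
  have a_edge: "a j = ie (edge_index 1 j)" for j by (simp add: a_def edge_index_def)
  have ie_edge_anti: "ie (edge_index u' w') \<le> ie (edge_index u w)"
    if "1 \<le> u" "u \<le> u'" "w \<le> w'" "u' < w'" "w' \<le> n" for u w u' w'
    using anti that by (rule edge_exponent_antimono)
  have ie_le_a: "ie (edge_index u w) \<le> a j" if "1 \<le> u" "u < w" "w \<le> n" "j \<le> w" for u w j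
    using ie_edge_anti[of 1 u j w] that by (simp add: a_edge)
  have ie_lt: "ie (edge_index u w) < t" if "1 \<le> u" "u < w" "w \<le> n" for u w
    using ie_le_a[OF that, of 1] that \<open>ie 1 < t\<close> by (simp add: a_def r_def)
  have splines_iff: "f \<in> splines (p ^ t) n (\<lambda>s. p ^ ie s) \<longleftrightarrow> is_vec (p ^ t) n f \<and>
      (\<forall>u w. 1 \<le> u \<and> u < w \<and> w \<le> n \<longrightarrow> p ^ ie (edge_index u w) dvd f u - f w)" for f
    by (rule splines_power_labels_iff) (use \<open>p > 1\<close> ie_lt in \<open>auto intro: less_imp_le\<close>)
  have root_dvd: "p ^ a j dvd g j - g 1" if "g \<in> splines (p ^ t) n (\<lambda>s. p ^ ie s)" "j \<in> {2..n}" for g j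
  proof -
    have "p ^ a j dvd g 1 - g j" using that by (simp add: splines_iff a_edge)
    then show ?thesis by (simp add: dvd_diff_commute)
  qed
  have a_lt: "a j < t" if "j \<in> {2..n}" for j
    using that ie_lt[of 1 j] by (auto simp: a_edge)
  show ?thesis
  proof (rule min_flow_up_gen_insert_ones[OF assms(1-3), where pv = "\<lambda>_. 1" and d = a])
    fix j assume j: "j \<in> {2..n}"
    then show "flow_up n (\<lambda>v. if v = j then p ^ ie (r (j - 1) + 1) else 0) j"
      using \<open>p > 1\<close> by (simp add: flow_up_def)
    show "(\<lambda>v. if v = j then p ^ ie (r (j - 1) + 1) else 0) \<in> splines (p ^ t) n (\<lambda>s. p ^ ie s)"
      unfolding a_def[symmetric] using j a_lt[OF j] ie_le_a \<open>p > 1\<close>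
      by (intro point_vector_in_splines) (auto intro: power_strict_increasing le_imp_power_dvd)
  next
    fix f assume f: "f \<in> splines (p ^ t) n (\<lambda>s. p ^ ie s)"
    define x where "x k = (if k = 1 then f 1 else (f k - f 1) div p ^ a k)" for k
    have "x 1 + (\<Sum>k=2..n. x k * (if v = k then p ^ ie (r (k - 1) + 1) else 0)) = f v"
      if "v \<in> {1..n}" for v
      by (rule point_vector_expansion[OF that]) (use root_dvd[OF f] in \<open>auto simp: x_def a_def\<close>)
    then show "\<exists>x. \<forall>v\<in>{1..n}.
                 f v = (x 1 + (\<Sum>k=2..n. x k * (if v = k then p ^ ie (r (k - 1) + 1) else 0))) mod p ^ t"
      using spline_mod_eq[OF f] by (intro exI[of _ x]) simp
  next
    show "1 \<in> {1..n} \<and> a v < t" if "v \<in> {2..n}" for v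
      using that a_lt by auto
    show "p ^ a v dvd g v - g 1" if "g \<in> splines (p ^ t) n (\<lambda>s. p ^ ie s)" "v \<in> {2..n}" for g v
      using root_dvd that .
    show "(if j = k then p ^ ie (r (k - 1) + 1) else 0) - (if 1 = k then p ^ ie (r (k - 1) + 1) else 0)
          = (if k = j then p ^ a j else 0)" if "j \<in> {2..n}" "k \<in> {2..n}" for j k
      using that by (auto simp: a_def)
  qed
qed

lemma min_flow_up_gen_monotone_labels:
  fixes p :: int and ie :: "nat \<Rightarrow> nat"
  assumes "p > 1" "t \<ge> 1" "n \<ge> 1"
    and mono: "\<And>s. 1 \<le> s \<Longrightarrow> s < r n \<Longrightarrow> ie s \<le> ie (Suc s)" and "ie (r n) < t"
  shows "let S = insert (ones n)
               ((\<lambda>j. \<lambda>v. if j \<le> v \<and> v \<le> n then p ^ ie (r n - (n - j)) else 0) ` {2..n})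
         in min_flow_up_gen (p ^ t) n (\<lambda>s. p ^ ie s) S \<and> card S = n
            \<and> spline_rank (p ^ t) n (\<lambda>s. p ^ ie s) = n"
proof -
  define b where "b j = ie (r n - (n - j))" for j
  have b_edge: "b j = ie (edge_index (j - 1) n)" if "j \<in> {2..n}" for j
    using that edge_index_pred_last[of j n] by (auto simp: b_def)
  have ie_edge_mono: "ie (edge_index u w) \<le> ie (edge_index u' w')"
    if "1 \<le> u" "u \<le> u'" "w \<le> w'" "u' < w'" "w' \<le> n" for u w u' w'
    using mono that by (rule edge_exponent_mono)
  have ie_le_b: "ie (edge_index u w) \<le> b j" if "1 \<le> u" "u < j" "j \<le> w" "w \<le> n" for u w j
    using b_edge[of j] ie_edge_mono[of u "j - 1" w n] that by auto
  have ie_lt: "ie (edge_index u w) < t" if "1 \<le> u" "u < w" "w \<le> n" for u w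
  proof -
    have "ie (edge_index u w) \<le> ie (edge_index (n - 1) n)" using that by (intro ie_edge_mono) auto
    then show ?thesis using edge_index_pred_last[of n n] that \<open>ie (r n) < t\<close> by simp
  qed
  have splines_iff: "f \<in> splines (p ^ t) n (\<lambda>s. p ^ ie s) \<longleftrightarrow> is_vec (p ^ t) n f \<and>
      (\<forall>u w. 1 \<le> u \<and> u < w \<and> w \<le> n \<longrightarrow> p ^ ie (edge_index u w) dvd f u - f w)" for f
    by (rule splines_power_labels_iff) (use \<open>p > 1\<close> ie_lt in \<open>auto intro: less_imp_le\<close>)
  have cut_dvd: "p ^ b j dvd g j - g (j - 1)"
    if g: "g \<in> splines (p ^ t) n (\<lambda>s. p ^ ie s)" and j: "j \<in> {2..n}" for g j
  proof -
    have "p ^ b j dvd g u - g n" if "u \<in> {j - 1, j}" "u < n" for u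
    proof -
      have "b j \<le> ie (edge_index u n)"
        using b_edge[OF j] ie_edge_mono[of "j - 1" u n n] that j by auto
      moreover have "p ^ ie (edge_index u n) dvd g u - g n" using g that j by (auto simp: splines_iff)
      ultimately show ?thesis by (meson dvd_trans le_imp_power_dvd)
    qed
    then have "p ^ b j dvd g j - g n" and "p ^ b j dvd g (j - 1) - g n"
      using j by (cases "j = n"; auto)+
    from dvd_diff[OF this] show ?thesis by simp
  qed
  show ?thesis
  proof (rule min_flow_up_gen_insert_ones[OF assms(1-3), where pv = "\<lambda>j. j - 1" and d = b])
    fix j assume j: "j \<in> {2..n}"
    then show "flow_up n (\<lambda>v. if j \<le> v \<and> v \<le> n then p ^ ie (r n - (n - j)) else 0) j"
      using \<open>p > 1\<close> by (simp add: flow_up_def)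
    have "b j < t" using j ie_lt[of "j - 1" n] by (auto simp: b_edge)
    then show "(\<lambda>v. if j \<le> v \<and> v \<le> n then p ^ ie (r n - (n - j)) else 0) \<in> splines (p ^ t) n (\<lambda>s. p ^ ie s)"
      unfolding b_def[symmetric] using j ie_le_b \<open>p > 1\<close>
      by (intro step_vector_in_splines) (auto intro: power_strict_increasing le_imp_power_dvd)
  next
    fix f assume f: "f \<in> splines (p ^ t) n (\<lambda>s. p ^ ie s)"
    define x where "x k = (if k = 1 then f 1 else (f k - f (k - 1)) div p ^ b k)" for k
    have "x 1 + (\<Sum>k=2..n. x k * (if k \<le> v \<and> v \<le> n then p ^ ie (r n - (n - k)) else 0)) = f v"
      if "v \<in> {1..n}" for v
      by (rule step_vector_expansion[OF that]) (use cut_dvd[OF f] in \<open>auto simp: x_def b_def\<close>)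
    then show "\<exists>x. \<forall>v\<in>{1..n}.
                 f v = (x 1 + (\<Sum>k=2..n. x k * (if k \<le> v \<and> v \<le> n then p ^ ie (r n - (n - k)) else 0))) mod p ^ t"
      using spline_mod_eq[OF f] by (intro exI[of _ x]) simp
  next
    show "v - 1 \<in> {1..n} \<and> b v < t" if "v \<in> {2..n}" for v
      using that ie_lt[of "v - 1" n] by (auto simp: b_edge)
    show "p ^ b v dvd g v - g (v - 1)" if "g \<in> splines (p ^ t) n (\<lambda>s. p ^ ie s)" "v \<in> {2..n}" for g v
      using cut_dvd that .
    show "(if k \<le> j \<and> j \<le> n then p ^ ie (r n - (n - k)) else 0)
          - (if k \<le> j - 1 \<and> j - 1 \<le> n then p ^ ie (r n - (n - k)) else 0)
          = (if k = j then p ^ b j else 0)" if "j \<in> {2..n}" "k \<in> {2..n}" for j k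
      using that by (auto simp: b_def)
  qed
qed

theorem mainTheorem8:
  fixes p :: int and t n :: nat and ie :: "nat \<Rightarrow> nat"
  assumes "prime p" and "t \<ge> 1" and "n \<ge> 1"
  shows "((\<forall>s. 1 \<le> s \<and> s < r n \<longrightarrow> p ^ ie (Suc s) dvd p ^ ie s) \<and> p ^ ie 1 dvd p ^ t
           \<and> ie (r n) \<ge> 1 \<and> ie 1 < t \<longrightarrow>
          (let S = insert (ones n)
                 ((\<lambda>j. \<lambda>v. if v = j then p ^ ie (r (j - 1) + 1) else 0) ` {2..n})
           in min_flow_up_gen (p ^ t) n (\<lambda>s. p ^ ie s) S \<and> card S = n
              \<and> spline_rank (p ^ t) n (\<lambda>s. p ^ ie s) = n))
       \<and> ((\<forall>s. 1 \<le> s \<and> s < r n \<longrightarrow> p ^ ie s dvd p ^ ie (Suc s)) \<and> p ^ ie (r n) dvd p ^ t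
           \<and> ie 1 \<ge> 1 \<and> ie (r n) < t \<longrightarrow>
          (let S = insert (ones n)
                 ((\<lambda>j. \<lambda>v. if j \<le> v \<and> v \<le> n then p ^ ie (r n - (n - j)) else 0) ` {2..n})
           in min_flow_up_gen (p ^ t) n (\<lambda>s. p ^ ie s) S \<and> card S = n
              \<and> spline_rank (p ^ t) n (\<lambda>s. p ^ ie s) = n))"
proof -
  have "p > 1" using \<open>prime p\<close> by (rule prime_gt_1_int)
  then have exponent_dvd_iff: "p ^ a dvd p ^ b \<longleftrightarrow> a \<le> b" for a b
    by (simp add: dvd_power_iff)
  show ?thesis
    using min_flow_up_gen_antitone_labels[OF \<open>p > 1\<close> assms(2,3), of ie]
      min_flow_up_gen_monotone_labels[OF \<open>p > 1\<close> assms(2,3), of ie]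
    unfolding exponent_dvd_iff by blast
qed

end
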